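(* For all $n\ge 1$, $f(n)<2n$.
   Context: $\mathbb{N}=\{0,1,2,\dots\}$. The sequence $f:\mathbb{N}\to\mathbb{N}$ is defined greedily: $f(0)=0$, and for $n\ge1$, $f(n)$ is the least natural number such that (i) $f(n)\notin\{f(0),f(1),\dots,f(n-1)\}$ and (ii) $\sum_{1\le i\le n} f(i)$ is divisible by $n$. *)

theory Defs
  imports Main
begin

(* vals n = [f 0, f 1, ..., f n] *)
fun vals :: "nat \<Rightarrow> nat list" where
  "vals 0 = [0]"
| "vals (Suc n) = vals n @
     [LEAST v. v \<notin> set (vals n) \<and> Suc n dvd ((\<Sum>i=1..n. vals n ! i) + v)]"

definition f :: "nat \<Rightarrow> nat" where
  "f n = vals n ! n"

lemma f_0: "f 0 = 0" by (simp add: f_def)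

end

theory Submission
  imports Defs
begin

text \<open>Write \<open>S n = f 1 + \<dots> + f n\<close>. By induction, \<open>S n = n c\<close> with \<open>c \<le> n\<close> and every
  value \<open>f 0, \<dots>, f n\<close> is at most \<open>c + n\<close>. Then \<open>c + n + 1\<close> is unused and
  \<open>S n + (c + n + 1) = (n + 1)(c + 1)\<close>, so the greedy choice gives \<open>f (n + 1) \<le> c + n + 1 \<le> 2n + 1\<close>.
  The new mean \<open>S (n + 1) / (n + 1)\<close> is squeezed between \<open>c\<close> and \<open>c + 1\<close>, which keeps the
  invariant alive.\<close>

lemma length_vals: "length (vals n) = Suc n"
  by (induction n) auto

lemma nth_vals: "i \<le> n \<Longrightarrow> vals n ! i = f i"
proof (induction n)
  case 0
  then show ?case by (simp add: f_def)
next
  case (Suc n)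
  show ?case
  proof (cases "i = Suc n")
    case False
    with Suc have "vals (Suc n) ! i = vals n ! i"
      by (simp del: vals.simps add: nth_append length_vals vals.simps(2))
    with False Suc show ?thesis by simp
  qed (simp add: f_def)
qed

lemma set_vals: "set (vals n) = f ` {..n}"
proof -
  have "set (vals n) = (\<lambda>i. vals n ! i) ` {..n}"
    by (auto simp: set_conv_nth length_vals less_Suc_eq_le simp del: vals.simps)
  also have "\<dots> = f ` {..n}"
    by (rule image_cong) (simp_all add: nth_vals)
  finally show ?thesis .
qed

lemma f_Suc:
  "f (Suc n) = (LEAST v. v \<notin> f ` {..n} \<and> Suc n dvd (\<Sum>i=1..n. f i) + v)"
proof -
  have "(\<Sum>i=1..n. vals n ! i) = (\<Sum>i=1..n. f i)"
    by (rule sum.cong) (auto simp: nth_vals)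
  then show ?thesis
    by (simp del: vals.simps add: f_def nth_append length_vals vals.simps(2) set_vals)
qed

lemma greedy_step:
  assumes sum: "(\<Sum>i=1..n. f i) = n * c" and bound: "f ` {..n} \<subseteq> {..c + n}"
  shows "f (Suc n) \<le> c + n + 1" and "Suc n dvd (\<Sum>i=1..n. f i) + f (Suc n)"
proof -
  let ?P = "\<lambda>v. v \<notin> f ` {..n} \<and> Suc n dvd (\<Sum>i=1..n. f i) + v"
  have "(\<Sum>i=1..n. f i) + (c + n + 1) = Suc n * (c + 1)"
    unfolding sum by simp
  then have "Suc n dvd (\<Sum>i=1..n. f i) + (c + n + 1)"
    by (rule dvdI)
  moreover have "c + n + 1 \<notin> f ` {..n}"
    using bound by auto
  ultimately have candidate: "?P (c + n + 1)"
    by blast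
  show "f (Suc n) \<le> c + n + 1"
    unfolding f_Suc using candidate by (rule Least_le)
  show "Suc n dvd (\<Sum>i=1..n. f i) + f (Suc n)"
    unfolding f_Suc using LeastI[of ?P, OF candidate] by blast
qed

lemma mean_step_bounds:
  fixes n c v k :: nat
  assumes "n * c + v = Suc n * k" and "v \<le> c + n + 1" and "c \<le> n"
  shows "c \<le> k" and "k \<le> c + 1"
proof -
  have "Suc n * k \<le> Suc n * (c + 1)"
    using assms(1,2) by simp
  then show "k \<le> c + 1"
    by (simp only: mult_le_cancel1)
  show "c \<le> k"
  proof (rule ccontr)
    assume "\<not> c \<le> k"
    then have "Suc n * (k + 1) \<le> Suc n * c"
      by (intro mult_le_mono2) simp
    with assms(1,3) show False
      by simp
  qed
qed

lemma greedy_invariant: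
  "\<exists>c \<le> n. (\<Sum>i=1..n. f i) = n * c \<and> f ` {..n} \<subseteq> {..c + n}"
proof (induction n)
  case 0
  show ?case by (simp add: f_0)
next
  case (Suc n)
  then obtain c where c: "c \<le> n" and sum: "(\<Sum>i=1..n. f i) = n * c"
    and bound: "f ` {..n} \<subseteq> {..c + n}"
    by blast
  have le: "f (Suc n) \<le> c + n + 1"
    using greedy_step(1)[OF sum bound] .
  obtain k where k: "(\<Sum>i=1..n. f i) + f (Suc n) = Suc n * k"
    using greedy_step(2)[OF sum bound] by (elim dvdE)
  have ck: "c \<le> k" "k \<le> c + 1"
    using mean_step_bounds[OF k[unfolded sum] le c] by simp_all
  have "f ` {..Suc n} \<subseteq> {..k + Suc n}"
    using bound le ck by (auto simp: atMost_Suc)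
  moreover have "(\<Sum>i=1..Suc n. f i) = Suc n * k"
    using k by simp
  ultimately show ?case
    using c ck by (intro exI[of _ k]) auto
qed

theorem mainTheorem2:
  fixes n :: nat
  assumes "n \<ge> 1"
  shows "f n < 2 * n"
proof -
  obtain m where n: "n = Suc m"
    using assms by (cases n) auto
  obtain c where c: "c \<le> m" and sum: "(\<Sum>i=1..m. f i) = m * c"
    and bound: "f ` {..m} \<subseteq> {..c + m}"
    using greedy_invariant by blast
  have "f (Suc m) \<le> c + m + 1"
    using greedy_step(1)[OF sum bound] .
  with c show ?thesis
    by (simp add: n)
qed

end
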